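(* Let $\mathcal T$ be an orbital category. If $\mathcal C,\mathcal D$ are unital $\mathcal T$-weak indexing systems, then $\mathfrak R(\mathcal C)\vee\mathfrak R(\mathcal D)=\mathfrak R(\mathcal C\vee\mathcal D)$ (join in $\mathrm{Transf}_{\mathcal T}$ on the left, in weak indexing systems on the right) and $\mathfrak R(\mathcal C)\cap\mathfrak R(\mathcal D)=\mathfrak R(\mathcal C\cap\mathcal D)$.
   Context: For a small category $\mathcal T$, $\mathbb F_{\mathcal T}$ is the full subcategory of $\mathrm{Fun}(\mathcal T^{op},\mathrm{Set})$ on finite coproducts of representables; $\mathcal T$ is orbital if $\mathbb F_{\mathcal T}$ has pullbacks. $\mathbb F_V:=\mathbb F_{\mathcal T,/V}$, $*_V$ terminal; for $U\to V$, $\mathrm{Res}^V_U$ is pullback and $\mathrm{Ind}^V_U$ postcomposition. A full $\mathcal T$-subcategory assigns isomorphism-closed classes $\mathcal C_V\subseteq\mathrm{Ob}\,\mathbb F_V$ stable under restriction. For $S\in\mathbb F_V$ with orbits $U$ and $T_U\in\mathbb F_U$, $\coprod_U^ST_U:=\coprod_U\mathrm{Ind}_U^VT_U$. A $\mathcal T$-weak indexing system is a full $\mathcal T$-subcategory with $\mathcal C_V\neq\emptyset\Rightarrow *_V\in\mathcal C_V$ and closed under $\coprod^S_UT_U$ for $S\in\mathcal C_V$, $T_U\in\mathcal C_U$; these form a lattice under inclusion. It is unital if every $\mathcal C_V$ is nonempty and $S\sqcup S'\in\mathcal C_V\Rightarrow S,S'\in\mathcal C_V$. A transfer system is a wide subcategory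 $R\subseteq\mathcal T$ containing all isomorphisms such that for every commutative square $V'\to V$, $\alpha':V'\to U'$, $\alpha:V\to U$, $U'\to U$ with $\alpha\in R$ and $V'\to V\times_UU'$ a summand inclusion in $\mathbb F_{\mathcal T}$, $\alpha'\in R$; $\mathrm{Transf}_{\mathcal T}$ is their poset under inclusion. For unital $\mathcal C$, $\mathfrak R(\mathcal C)$ is the transfer system of maps $U\to V$ in $\mathcal T$ with $U$ (as a $V$-set) in $\mathcal C_V$. *)

theory Defs
  imports Main
begin

record ('o, 'm) cat =
  ob  :: "'o set"
  mr  :: "'m set"
  dm  :: "'m \<Rightarrow> 'o"
  cd  :: "'m \<Rightarrow> 'o"
  idm :: "'o \<Rightarrow> 'm"
  cmp :: "'m \<Rightarrow> 'm \<Rightarrow> 'm"   (* cmp T g f = g \<circ> f *)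

definition hom :: "('o,'m) cat \<Rightarrow> 'o \<Rightarrow> 'o \<Rightarrow> 'm set" where
  "hom T X Y = {f \<in> mr T. dm T f = X \<and> cd T f = Y}"

definition category :: "('o,'m) cat \<Rightarrow> bool" where
  "category T \<longleftrightarrow>
     (\<forall>f\<in>mr T. dm T f \<in> ob T \<and> cd T f \<in> ob T) \<and>
     (\<forall>X\<in>ob T. idm T X \<in> hom T X X) \<and>
     (\<forall>f\<in>mr T. \<forall>g\<in>mr T. cd T f = dm T g \<longrightarrow> cmp T g f \<in> hom T (dm T f) (cd T g)) \<and>
     (\<forall>f\<in>mr T. cmp T (idm T (cd T f)) f = f \<and> cmp T f (idm T (dm T f)) = f) \<and>
     (\<forall>f\<in>mr T. \<forall>g\<in>mr T. \<forall>h\<in>mr T. cd T f = dm T g \<longrightarrow> cd T g = dm T h \<longrightarrow>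
        cmp T h (cmp T g f) = cmp T (cmp T h g) f)"

definition iso :: "('o,'m) cat \<Rightarrow> 'm \<Rightarrow> bool" where
  "iso T f \<longleftrightarrow> f \<in> mr T \<and> (\<exists>g\<in>hom T (cd T f) (dm T f).
      cmp T g f = idm T (dm T f) \<and> cmp T f g = idm T (cd T f))"

text \<open>An object of F_T (a finite coproduct of representables) is encoded by the list of
  its orbits (objects of T).  By the Yoneda lemma a map from the coproduct of xs to the
  coproduct of ys is a function f on indices together with maps xs!i to ys!(f i) in T;
  we encode it as a pair (f, phi), considered up to equality on the indices below length xs.\<close>

type_synonym 'm fmor = "(nat \<Rightarrow> nat) \<times> (nat \<Rightarrow> 'm)"

definition F_obj :: "('o,'m) cat \<Rightarrow> 'o list \<Rightarrow> bool" where
  "F_obj T xs \<longleftrightarrow> set xs \<subseteq> ob T"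

definition F_hom :: "('o,'m) cat \<Rightarrow> 'o list \<Rightarrow> 'o list \<Rightarrow> 'm fmor \<Rightarrow> bool" where
  "F_hom T xs ys m \<longleftrightarrow> F_obj T xs \<and> F_obj T ys \<and>
     (\<forall>i<length xs. fst m i < length ys \<and> snd m i \<in> hom T (xs!i) (ys!(fst m i)))"

definition F_comp :: "('o,'m) cat \<Rightarrow> 'm fmor \<Rightarrow> 'm fmor \<Rightarrow> 'm fmor" where
  "F_comp T g f = (fst g \<circ> fst f, \<lambda>i. cmp T (snd g (fst f i)) (snd f i))"

definition F_id :: "('o,'m) cat \<Rightarrow> 'o list \<Rightarrow> 'm fmor" where
  "F_id T xs = (id, \<lambda>i. idm T (xs!i))"

definition F_eq :: "'o list \<Rightarrow> 'm fmor \<Rightarrow> 'm fmor \<Rightarrow> bool" where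
  "F_eq xs m m' \<longleftrightarrow> (\<forall>i<length xs. fst m i = fst m' i \<and> snd m i = snd m' i)"

definition F_iso :: "('o,'m) cat \<Rightarrow> 'o list \<Rightarrow> 'o list \<Rightarrow> 'm fmor \<Rightarrow> bool" where
  "F_iso T xs ys m \<longleftrightarrow> F_hom T xs ys m \<and>
     (\<exists>m'. F_hom T ys xs m' \<and> F_eq xs (F_comp T m' m) (F_id T xs) \<and>
           F_eq ys (F_comp T m m') (F_id T ys))"

definition is_F_pullback :: "('o,'m) cat \<Rightarrow> 'o list \<Rightarrow> 'o list \<Rightarrow> 'o list \<Rightarrow> 'm fmor \<Rightarrow> 'm fmor
    \<Rightarrow> 'o list \<Rightarrow> 'm fmor \<Rightarrow> 'm fmor \<Rightarrow> bool" where
  "is_F_pullback T X Y Z f g P p q \<longleftrightarrow>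
     F_hom T X Z f \<and> F_hom T Y Z g \<and> F_hom T P X p \<and> F_hom T P Y q \<and>
     F_eq P (F_comp T f p) (F_comp T g q) \<and>
     (\<forall>W a b. F_hom T W X a \<longrightarrow> F_hom T W Y b \<longrightarrow> F_eq W (F_comp T f a) (F_comp T g b) \<longrightarrow>
        (\<exists>h. F_hom T W P h \<and> F_eq W (F_comp T p h) a \<and> F_eq W (F_comp T q h) b \<and>
           (\<forall>h'. F_hom T W P h' \<and> F_eq W (F_comp T p h') a \<and> F_eq W (F_comp T q h') b
                  \<longrightarrow> F_eq W h' h)))"

definition orbital :: "('o,'m) cat \<Rightarrow> bool" where
  "orbital T \<longleftrightarrow> category T \<and>
     (\<forall>X Y Z f g. F_hom T X Z f \<longrightarrow> F_hom T Y Z g \<longrightarrow> (\<exists>P p q. is_F_pullback T X Y Z f g P p q))"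

definition F_summand_incl :: "('o,'m) cat \<Rightarrow> 'o list \<Rightarrow> 'o list \<Rightarrow> 'm fmor \<Rightarrow> bool" where
  "F_summand_incl T xs ys m \<longleftrightarrow> F_hom T xs ys m \<and>
     (\<exists>zs h. F_obj T zs \<and> F_iso T (xs @ zs) ys h \<and> F_eq xs m (F_comp T h (F_id T xs)))"

text \<open>A morphism of T, viewed as a morphism between representables in F_T.\<close>
definition single :: "'m \<Rightarrow> 'm fmor" where
  "single a = (\<lambda>_. 0, \<lambda>_. a)"

text \<open>An object of F_V = F_T/V is a list of morphisms p_i : U_i \<rightarrow> V of T (one per orbit).\<close>

definition S_obj :: "('o,'m) cat \<Rightarrow> 'o \<Rightarrow> 'm list \<Rightarrow> bool" where
  "S_obj T V ps \<longleftrightarrow> V \<in> ob T \<and> (\<forall>p\<in>set ps. p \<in> mr T \<and> cd T p = V)"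

definition S_hom :: "('o,'m) cat \<Rightarrow> 'o \<Rightarrow> 'm list \<Rightarrow> 'm list \<Rightarrow> 'm fmor \<Rightarrow> bool" where
  "S_hom T V ps qs m \<longleftrightarrow> S_obj T V ps \<and> S_obj T V qs \<and>
     F_hom T (map (dm T) ps) (map (dm T) qs) m \<and>
     (\<forall>i<length ps. cmp T (qs!(fst m i)) (snd m i) = ps!i)"

definition S_iso :: "('o,'m) cat \<Rightarrow> 'o \<Rightarrow> 'm list \<Rightarrow> 'm list \<Rightarrow> 'm fmor \<Rightarrow> bool" where
  "S_iso T V ps qs m \<longleftrightarrow> S_hom T V ps qs m \<and>
     (\<exists>m'. S_hom T V qs ps m' \<and> F_eq (map (dm T) ps) (F_comp T m' m) (F_id T (map (dm T) ps)) \<and>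
           F_eq (map (dm T) qs) (F_comp T m m') (F_id T (map (dm T) qs)))"

definition S_struct :: "'m list \<Rightarrow> 'm fmor" where
  "S_struct ps = (\<lambda>_. 0, \<lambda>i. ps!i)"

definition Ind :: "('o,'m) cat \<Rightarrow> 'm \<Rightarrow> 'm list \<Rightarrow> 'm list" where
  "Ind T a qs = map (cmp T a) qs"

text \<open>Coproduct over the orbits of S of Ind T_U (orbits of S = list entries).\<close>
definition S_coprod :: "('o,'m) cat \<Rightarrow> 'm list \<Rightarrow> (nat \<Rightarrow> 'm list) \<Rightarrow> 'm list" where
  "S_coprod T S Ts = concat (map (\<lambda>i. Ind T (S!i) (Ts i)) [0..<length S])"

type_synonym ('o,'m) tsub = "'o \<Rightarrow> 'm list set"

definition full_T_subcat :: "('o,'m) cat \<Rightarrow> ('o,'m) tsub \<Rightarrow> bool" where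
  "full_T_subcat T C \<longleftrightarrow>
     (\<forall>V\<in>ob T. C V \<subseteq> {S. S_obj T V S}) \<and>
     (\<forall>V\<in>ob T. \<forall>S\<in>C V. \<forall>S' m. S_iso T V S S' m \<longrightarrow> S' \<in> C V) \<and>
     (\<comment> \<open>stable under restriction Res^V_U (pullback along a : U \<rightarrow> V)\<close>
      \<forall>U V a S P p q. a \<in> hom T U V \<longrightarrow> S \<in> C V \<longrightarrow>
        is_F_pullback T (map (dm T) S) [U] [V] (S_struct S) (single a) P p q \<longrightarrow>
        map (snd q) [0..<length P] \<in> C U)"

definition weak_indexing_system :: "('o,'m) cat \<Rightarrow> ('o,'m) tsub \<Rightarrow> bool" where
  "weak_indexing_system T C \<longleftrightarrow> full_T_subcat T C \<and>
     (\<forall>V\<in>ob T. C V \<noteq> {} \<longrightarrow> [idm T V] \<in> C V) \<and>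
     (\<forall>V\<in>ob T. \<forall>S\<in>C V. \<forall>Ts. (\<forall>i<length S. Ts i \<in> C (dm T (S!i))) \<longrightarrow> S_coprod T S Ts \<in> C V)"

definition unital_wis :: "('o,'m) cat \<Rightarrow> ('o,'m) tsub \<Rightarrow> bool" where
  "unital_wis T C \<longleftrightarrow> weak_indexing_system T C \<and>
     (\<forall>V\<in>ob T. C V \<noteq> {} \<and> (\<forall>S S'. S @ S' \<in> C V \<longrightarrow> S \<in> C V \<and> S' \<in> C V))"

definition wis_join :: "('o,'m) cat \<Rightarrow> ('o,'m) tsub \<Rightarrow> ('o,'m) tsub \<Rightarrow> ('o,'m) tsub" where
  "wis_join T C D = (\<lambda>V. if V \<in> ob T then
      \<Inter>{E V | E. weak_indexing_system T E \<and> (\<forall>W\<in>ob T. C W \<subseteq> E W \<and> D W \<subseteq> E W)}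
    else {})"

definition wis_meet :: "('o,'m) tsub \<Rightarrow> ('o,'m) tsub \<Rightarrow> ('o,'m) tsub" where
  "wis_meet C D = (\<lambda>V. C V \<inter> D V)"

definition transfer_system :: "('o,'m) cat \<Rightarrow> 'm set \<Rightarrow> bool" where
  "transfer_system T R \<longleftrightarrow> R \<subseteq> mr T \<and>
     (\<forall>f. iso T f \<longrightarrow> f \<in> R) \<and>
     (\<forall>f\<in>R. \<forall>g\<in>R. cd T f = dm T g \<longrightarrow> cmp T g f \<in> R) \<and>
     (\<forall>V' V U' U b a' a c.
        b \<in> hom T V' V \<longrightarrow> a' \<in> hom T V' U' \<longrightarrow> a \<in> hom T V U \<longrightarrow> c \<in> hom T U' U \<longrightarrow>
        cmp T a b = cmp T c a' \<longrightarrow> a \<in> R \<longrightarrow>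
        (\<exists>P p q m. is_F_pullback T [V] [U'] [U] (single a) (single c) P p q \<and>
           F_hom T [V'] P m \<and> F_eq [V'] (F_comp T p m) (single b) \<and>
           F_eq [V'] (F_comp T q m) (single a') \<and> F_summand_incl T [V'] P m) \<longrightarrow>
        a' \<in> R)"

definition transf_join :: "('o,'m) cat \<Rightarrow> 'm set \<Rightarrow> 'm set \<Rightarrow> 'm set" where
  "transf_join T R1 R2 = \<Inter>{R. transfer_system T R \<and> R1 \<union> R2 \<subseteq> R}"

definition frakR :: "('o,'m) cat \<Rightarrow> ('o,'m) tsub \<Rightarrow> 'm set" where
  "frakR T C = {a \<in> mr T. [a] \<in> C (cd T a)}"

end

theory Submission
  imports Defs
begin

(* It is a transfer system: an isomorphism f
   gives [f] isomorphic to [id], restricting [a] in C and splitting off one orbit (unitality)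
   gives restriction, and [g o f] is the coproduct of [f] over [g].

   Conversely a transfer system R defines the weak indexing system of all V-sets whose orbits
   lie in R, and it contains a unital C as soon as R(C) is contained in R. Hence R(C v D) lies
   below every transfer system containing R(C) and R(D). On the other side, the join of two
   transfer systems is the closure of their union under composition: by pasting pullbacks,
   an orbit of a restriction of g o f is a restriction of f along an orbit of a restriction of g.
   Composites of maps of R(C) and R(D) lie in R(C v D), which gives equality. *)

locale small_category =
  fixes T :: "('o, 'm) cat"
  assumes category: "category T"
begin

lemma hom_ob: "f \<in> hom T A B \<Longrightarrow> A \<in> ob T \<and> B \<in> ob T"
  using category unfolding category_def hom_def by auto

lemma mr_in_hom: "f \<in> mr T \<Longrightarrow> f \<in> hom T (dm T f) (cd T f)"
  by (simp add: hom_def)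

lemma cmp_mr:
  "f \<in> mr T \<Longrightarrow> g \<in> mr T \<Longrightarrow> cd T f = dm T g \<Longrightarrow>
    cmp T g f \<in> mr T \<and> dm T (cmp T g f) = dm T f \<and> cd T (cmp T g f) = cd T g"
  using category unfolding category_def hom_def by auto

lemma cd_ob: "f \<in> mr T \<Longrightarrow> cd T f \<in> ob T"
  using hom_ob mr_in_hom by blast

lemma idm_hom: "A \<in> ob T \<Longrightarrow> idm T A \<in> hom T A A"
  using category unfolding category_def by blast

lemma cmp_hom: "f \<in> hom T A B \<Longrightarrow> g \<in> hom T B C \<Longrightarrow> cmp T g f \<in> hom T A C"
  using category unfolding category_def hom_def by auto

lemma cmp_idm_left: "f \<in> hom T A B \<Longrightarrow> cmp T (idm T B) f = f"
  using category unfolding category_def hom_def by auto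

lemma cmp_idm_right: "f \<in> hom T A B \<Longrightarrow> cmp T f (idm T A) = f"
  using category unfolding category_def hom_def by auto

lemma cmp_assoc:
  "f \<in> hom T A B \<Longrightarrow> g \<in> hom T B C \<Longrightarrow> h \<in> hom T C D \<Longrightarrow>
    cmp T (cmp T h g) f = cmp T h (cmp T g f)"
  using category unfolding category_def hom_def by (metis (mono_tags, lifting) mem_Collect_eq)

lemma cmp_reassoc:
  "f \<in> hom T A B \<Longrightarrow> g \<in> hom T B C \<Longrightarrow> h \<in> hom T C D \<Longrightarrow> cmp T h g = k \<Longrightarrow>
    cmp T h (cmp T g f) = cmp T k f"
  using cmp_assoc by metis

lemma cmp_idm_idm: "A \<in> ob T \<Longrightarrow> cmp T (idm T A) (idm T A) = idm T A"
  using idm_hom cmp_idm_left by blast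

lemma isoI:
  "u \<in> hom T A B \<Longrightarrow> v \<in> hom T B A \<Longrightarrow> cmp T v u = idm T A \<Longrightarrow> cmp T u v = idm T B \<Longrightarrow> iso T u"
  unfolding iso_def hom_def by auto

lemma iso_idm: "A \<in> ob T \<Longrightarrow> iso T (idm T A)"
  using idm_hom cmp_idm_left by (blast intro: isoI)

section \<open>Pullbacks in F_T\<close>

lemma F_pullback_legs:
  assumes "is_F_pullback T X Y Z f g P p q" "j < length P"
  shows "fst p j < length X" "snd p j \<in> hom T (P!j) (X!fst p j)"
    and "fst q j < length Y" "snd q j \<in> hom T (P!j) (Y!fst q j)"
    and "snd f (fst p j) \<in> hom T (X!fst p j) (Z!fst f (fst p j))"
    and "snd g (fst q j) \<in> hom T (Y!fst q j) (Z!fst g (fst q j))"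
    and "fst f (fst p j) = fst g (fst q j)"
    and "cmp T (snd f (fst p j)) (snd p j) = cmp T (snd g (fst q j)) (snd q j)"
  using assms unfolding is_F_pullback_def F_hom_def F_eq_def F_comp_def by auto

lemma F_pullback_lift:
  assumes pb: "is_F_pullback T X Y Z f g P p q"
    and "x < length X" "y < length Y" "\<alpha> \<in> hom T w (X!x)" "\<beta> \<in> hom T w (Y!y)"
    and "fst f x = fst g y" "cmp T (snd f x) \<alpha> = cmp T (snd g y) \<beta>"
  obtains j u where "j < length P" "u \<in> hom T w (P!j)"
    "fst p j = x" "cmp T (snd p j) u = \<alpha>" "fst q j = y" "cmp T (snd q j) u = \<beta>"
proof -
  have "w \<in> ob T" using assms(4) hom_ob by blast
  then have "F_hom T [w] X (\<lambda>_. x, \<lambda>_. \<alpha>)" "F_hom T [w] Y (\<lambda>_. y, \<lambda>_. \<beta>)"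
    and "F_eq [w] (F_comp T f (\<lambda>_. x, \<lambda>_. \<alpha>)) (F_comp T g (\<lambda>_. y, \<lambda>_. \<beta>))"
    using assms pb by (auto simp: is_F_pullback_def F_hom_def F_obj_def F_eq_def F_comp_def)
  then obtain h where "F_hom T [w] P h" "F_eq [w] (F_comp T p h) (\<lambda>_. x, \<lambda>_. \<alpha>)"
    "F_eq [w] (F_comp T q h) (\<lambda>_. y, \<lambda>_. \<beta>)"
    using pb unfolding is_F_pullback_def by meson
  then show thesis
    by (intro that[of "fst h 0" "snd h 0"]) (auto simp: F_hom_def F_eq_def F_comp_def)
qed

lemma F_pullback_unique:
  assumes pb: "is_F_pullback T X Y Z f g P p q"
    and j: "j < length P" "j' < length P" and u: "u \<in> hom T w (P!j)" "u' \<in> hom T w (P!j')"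
    and "fst p j = fst p j'" "fst q j = fst q j'"
    and "cmp T (snd p j) u = cmp T (snd p j') u'" "cmp T (snd q j) u = cmp T (snd q j') u'"
  shows "j = j' \<and> u = u'"
proof -
  define a :: "'m fmor" where "a = ((\<lambda>_. fst p j), (\<lambda>_. cmp T (snd p j) u))"
  define b :: "'m fmor" where "b = ((\<lambda>_. fst q j), (\<lambda>_. cmp T (snd q j) u))"
  have w: "w \<in> ob T" using u hom_ob by blast
  have "F_hom T [w] X a" "F_hom T [w] Y b"
    using pb F_pullback_legs[OF pb j(1)] w cmp_hom[OF u(1)]
    by (auto simp: a_def b_def is_F_pullback_def F_hom_def F_obj_def)
  moreover have "F_eq [w] (F_comp T f a) (F_comp T g b)"
    using F_pullback_legs[OF pb j(1)] by (simp add: a_def b_def F_eq_def F_comp_def flip: cmp_assoc[OF u(1)])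
  ultimately obtain h where h: "\<forall>h'. F_hom T [w] P h' \<and> F_eq [w] (F_comp T p h') a \<and>
      F_eq [w] (F_comp T q h') b \<longrightarrow> F_eq [w] h' h"
    using pb unfolding is_F_pullback_def by meson
  have "F_hom T [w] P (\<lambda>_. j, \<lambda>_. u)" "F_hom T [w] P (\<lambda>_. j', \<lambda>_. u')"
    using pb j u w by (auto simp: is_F_pullback_def F_hom_def F_obj_def)
  then have "F_eq [w] (\<lambda>_. j, \<lambda>_. u) h" "F_eq [w] (\<lambda>_. j', \<lambda>_. u') h"
    using h assms(6-9) by (auto simp: a_def b_def F_eq_def F_comp_def)
  then show ?thesis by (simp add: F_eq_def)
qed

lemma F_pullback_endo_idm:
  assumes pb: "is_F_pullback T X Y Z f g P p q" and "i < length P" "r < length P"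
    and "v \<in> hom T (P!i) (P!r)" "fst p r = fst p i" "fst q r = fst q i"
    and "cmp T (snd p r) v = snd p i" "cmp T (snd q r) v = snd q i"
  shows "r = i \<and> v = idm T (P!i)"
proof -
  have "P!i \<in> ob T" using assms(4) hom_ob by blast
  then show ?thesis
    using F_pullback_unique[OF pb assms(3,2,4) idm_hom] F_pullback_legs[OF pb assms(2)] assms(5-8)
    by (simp add: cmp_idm_right)
qed

lemma single_pullback_legs:
  assumes "is_F_pullback T [V] [U'] [U] (single a) (single c) P p q" "j < length P"
  shows "fst p j = 0" "fst q j = 0" "snd p j \<in> hom T (P!j) V" "snd q j \<in> hom T (P!j) U'"
    and "cmp T a (snd p j) = cmp T c (snd q j)"
  using F_pullback_legs[OF assms] by (auto simp: single_def)

lemma single_pullback_lift: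
  assumes "is_F_pullback T [V] [U'] [U] (single a) (single c) P p q"
    and "\<alpha> \<in> hom T w V" "\<beta> \<in> hom T w U'" "cmp T a \<alpha> = cmp T c \<beta>"
  obtains j u where "j < length P" "u \<in> hom T w (P!j)"
    "cmp T (snd p j) u = \<alpha>" "cmp T (snd q j) u = \<beta>"
  by (rule F_pullback_lift[OF assms(1), of 0 0 \<alpha> w \<beta>]) (use assms(2-4) that in \<open>auto simp: single_def\<close>)

lemma single_pullback_unique:
  assumes "is_F_pullback T [V] [U'] [U] (single a) (single c) P p q"
    and "j < length P" "j' < length P" "u \<in> hom T w (P!j)" "u' \<in> hom T w (P!j')"
    and "cmp T (snd p j) u = cmp T (snd p j') u'" "cmp T (snd q j) u = cmp T (snd q j') u'"
  shows "j = j' \<and> u = u'"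
  using F_pullback_unique[OF assms(1-5)] single_pullback_legs[OF assms(1)] assms(2,3,6,7) by simp

lemma single_pullback_endo_idm:
  assumes "is_F_pullback T [V] [U'] [U] (single a) (single c) P p q"
    and "i < length P" "r < length P" "v \<in> hom T (P!i) (P!r)"
    and "cmp T (snd p r) v = snd p i" "cmp T (snd q r) v = snd q i"
  shows "r = i \<and> v = idm T (P!i)"
  using F_pullback_endo_idm[OF assms(1-4)] single_pullback_legs[OF assms(1)] assms(2,3,5,6) by simp

lemma F_pullback_cong_left:
  assumes "F_eq X f f'" "is_F_pullback T X Y Z f g P p q"
  shows "is_F_pullback T X Y Z f' g P p q"
proof -
  have "F_hom T X Z f' \<longleftrightarrow> F_hom T X Z f"
    using assms(1) by (auto simp: F_hom_def F_eq_def)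
  moreover have "F_eq W (F_comp T f' a) k \<longleftrightarrow> F_eq W (F_comp T f a) k" if "F_hom T W X a" for W a k
    using assms(1) that by (auto simp: F_hom_def F_eq_def F_comp_def)
  ultimately show ?thesis
    using assms(2) unfolding is_F_pullback_def by simp
qed

lemma F_summand_incl_nth:
  assumes P: "F_obj T P" and l: "l < length P"
  shows "F_summand_incl T [P!l] P (\<lambda>_. l, \<lambda>_. idm T (P!l))"
proof -
  define zs where "zs = take l P @ drop (Suc l) P"
  define \<sigma> where "\<sigma> i = (if i = 0 then l else if i \<le> l then i - 1 else i)" for i
  define \<tau> where "\<tau> j = (if j = l then 0 else if j < l then Suc j else j)" for j
  have ob: "P!j \<in> ob T" if "j < length P" for j
    using P that by (auto simp: F_obj_def)
  have len: "length ([P!l] @ zs) = length P"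
    using l by (simp add: zs_def)
  have nth: "([P!l] @ zs)!i = P!\<sigma> i" if "i < length P" for i
    using that l by (cases i) (auto simp: zs_def \<sigma>_def nth_append)
  have \<tau>: "\<tau> j < length P" "\<sigma> (\<tau> j) = j" if "j < length P" for j
    using that l by (auto simp: \<sigma>_def \<tau>_def)
  define h :: "'m fmor" where "h = (\<sigma>, \<lambda>i. idm T (P!\<sigma> i))"
  define h' :: "'m fmor" where "h' = (\<tau>, \<lambda>j. idm T (P!j))"
  have "F_hom T ([P!l] @ zs) P h" "F_hom T P ([P!l] @ zs) h'"
    using P l len nth \<tau> ob idm_hom
    by (auto simp: F_hom_def F_obj_def h_def h'_def \<sigma>_def zs_def dest: in_set_takeD in_set_dropD)
  moreover have "F_eq ([P!l] @ zs) (F_comp T h' h) (F_id T ([P!l] @ zs))"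
    and "F_eq P (F_comp T h h') (F_id T P)"
    using len nth l by (auto simp: ob cmp_idm_idm F_eq_def F_comp_def F_id_def h_def h'_def \<sigma>_def \<tau>_def)
  ultimately have "F_iso T ([P!l] @ zs) P h"
    unfolding F_iso_def by blast
  moreover have "F_obj T zs"
    using P by (auto simp: F_obj_def zs_def dest: in_set_takeD in_set_dropD)
  moreover have "F_hom T [P!l] P (\<lambda>_. l, \<lambda>_. idm T (P!l))"
    using P l ob idm_hom by (auto simp: F_hom_def F_obj_def)
  moreover have "F_eq [P!l] (\<lambda>_. l, \<lambda>_. idm T (P!l)) (F_comp T h (F_id T [P!l]))"
    using l by (simp add: ob cmp_idm_idm F_eq_def F_comp_def F_id_def h_def \<sigma>_def)
  ultimately show ?thesis
    unfolding F_summand_incl_def by blast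
qed

lemma F_summand_incl_singleton:
  assumes "F_summand_incl T [V'] P m"
  shows "fst m 0 < length P" "snd m 0 \<in> hom T V' (P!fst m 0)" "iso T (snd m 0)"
proof -
  obtain zs h h' where "F_hom T ([V'] @ zs) P h" "F_hom T P ([V'] @ zs) h'"
    and inv: "F_eq ([V'] @ zs) (F_comp T h' h) (F_id T ([V'] @ zs))" "F_eq P (F_comp T h h') (F_id T P)"
    and m: "F_eq [V'] m (F_comp T h (F_id T [V']))"
    using assms unfolding F_summand_incl_def F_iso_def by blast
  then have h0: "fst h 0 < length P" "snd h 0 \<in> hom T V' (P!fst h 0)"
    and h'0: "fst h' (fst h 0) = 0" "snd h' (fst h 0) \<in> hom T (P!fst h 0) V'"
    using inv(1) by (auto simp: F_hom_def F_eq_def F_comp_def F_id_def)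
  have "fst m 0 = fst h 0" "snd m 0 = snd h 0"
    using m h0 cmp_idm_right by (auto simp: F_eq_def F_comp_def F_id_def)
  moreover have "iso T (snd h 0)"
    using isoI[OF h0(2) h'0(2)] inv h0(1) h'0(1) by (fastforce simp: F_eq_def F_comp_def F_id_def)
  ultimately show "fst m 0 < length P" "snd m 0 \<in> hom T V' (P!fst m 0)" "iso T (snd m 0)"
    using h0 by simp_all
qed

lemma pasted_pullback_square:
  assumes f: "f \<in> hom T V Y" and g: "g \<in> hom T Y U" and c: "c \<in> hom T U' U"
    and pb1: "is_F_pullback T [Y] [U'] [U] (single g) (single c) P1 p1 q1" and j: "j < length P1"
    and pb2: "is_F_pullback T [V] [P1!j] [Y] (single f) (single (snd p1 j)) P2 p2 q2"
    and l2: "l2 < length P2"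
  shows "cmp T (cmp T g f) (snd p2 l2) = cmp T c (cmp T (snd q1 j) (snd q2 l2))"
proof -
  note legs1 = single_pullback_legs[OF pb1 j] and legs2 = single_pullback_legs[OF pb2 l2]
  have "cmp T (cmp T g f) (snd p2 l2) = cmp T g (cmp T (snd p1 j) (snd q2 l2))"
    using cmp_assoc[OF legs2(3) f g] legs2(5) by simp
  also have "\<dots> = cmp T c (cmp T (snd q1 j) (snd q2 l2))"
    using cmp_reassoc[OF legs2(4) legs1(3) g legs1(5)] cmp_assoc[OF legs2(4) legs1(4) c] by simp
  finally show ?thesis .
qed

lemma pasting_lift_iso:
  assumes f: "f \<in> hom T V Y" and g: "g \<in> hom T Y U" and c: "c \<in> hom T U' U"
    and pb: "is_F_pullback T [V] [U'] [U] (single (cmp T g f)) (single c) P p q" and l: "l < length P"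
    and pb1: "is_F_pullback T [Y] [U'] [U] (single g) (single c) P1 p1 q1" and j: "j < length P1"
    and pb2: "is_F_pullback T [V] [P1!j] [Y] (single f) (single (snd p1 j)) P2 p2 q2"
    and l2: "l2 < length P2" and u: "u \<in> hom T (P!l) (P2!l2)"
    and up: "cmp T (snd p2 l2) u = snd p l" and uq: "cmp T (snd q1 j) (cmp T (snd q2 l2) u) = snd q l"
  shows "iso T u"
proof -
  note legs1 = single_pullback_legs[OF pb1 j] and legs2 = single_pullback_legs[OF pb2 l2]
  define x y where "x = snd p2 l2" and "y = snd q2 l2"
  have x: "x \<in> hom T (P2!l2) V" and y: "y \<in> hom T (P2!l2) (P1!j)"
    and fx: "cmp T f x = cmp T (snd p1 j) y" and yu: "cmp T (snd q1 j) (cmp T y u) = snd q l"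
    using legs2 uq by (simp_all add: x_def y_def)
  have y': "cmp T (snd q1 j) y \<in> hom T (P2!l2) U'"
    using cmp_hom[OF y legs1(4)] .
  obtain r v where r: "r < length P" "v \<in> hom T (P2!l2) (P!r)"
    and v: "cmp T (snd p r) v = x" "cmp T (snd q r) v = cmp T (snd q1 j) y"
    using single_pullback_lift[OF pb x y'] pasted_pullback_square[OF f g c pb1 j pb2 l2]
    unfolding x_def y_def by blast
  note legsr = single_pullback_legs[OF pb r(1)]
  have "r = l \<and> cmp T v u = idm T (P!l)"
    using single_pullback_endo_idm[OF pb l r(1) cmp_hom[OF u r(2)]] up yu
      cmp_reassoc[OF u r(2) legsr(3) v(1)] cmp_reassoc[OF u r(2) legsr(4) v(2)]
      cmp_assoc[OF u y legs1(4)]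
    by (simp add: x_def)
  then have v_hom: "v \<in> hom T (P2!l2) (P!l)" and vu: "cmp T v u = idm T (P!l)"
    and v_legs: "cmp T (snd p l) v = x" "cmp T (snd q l) v = cmp T (snd q1 j) y"
    using r(2) v by auto
  have uv: "cmp T u v \<in> hom T (P2!l2) (P2!l2)"
    using cmp_hom[OF v_hom u] .
  have xuv: "cmp T x (cmp T u v) = x"
    using cmp_reassoc[OF v_hom u x up[folded x_def]] v_legs(1) by simp
  have "cmp T (snd p1 j) (cmp T y (cmp T u v)) = cmp T (snd p1 j) y"
    using cmp_reassoc[OF uv y legs1(3) fx[symmetric]] cmp_assoc[OF uv x f] xuv fx by simp
  moreover have "cmp T (snd q1 j) (cmp T y (cmp T u v)) = cmp T (snd q1 j) y"
    using cmp_assoc[OF v_hom u y] cmp_reassoc[OF v_hom cmp_hom[OF u y] legs1(4) yu] v_legs(2) by simp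
  ultimately have "cmp T y (cmp T u v) = y"
    using single_pullback_unique[OF pb1 j j cmp_hom[OF uv y] y] by simp
  then have "cmp T u v = idm T (P2!l2)"
    using single_pullback_endo_idm[OF pb2 l2 l2 uv] xuv by (simp add: x_def y_def)
  then show ?thesis
    using isoI[OF u v_hom vu] by simp
qed

end

section \<open>Transfer systems\<close>

definition comp_closed :: "('o, 'm) cat \<Rightarrow> 'm set \<Rightarrow> bool" where
  "comp_closed T R \<longleftrightarrow> (\<forall>f\<in>R. \<forall>g\<in>R. cd T f = dm T g \<longrightarrow> cmp T g f \<in> R)"

text \<open>The restriction axiom for the orbits of one pullback, instead of for all maps isomorphic
  to them; in presence of isomorphisms and composites the two agree (see transfer_system_iff).\<close>
definition restriction_closed :: "('o, 'm) cat \<Rightarrow> 'm set \<Rightarrow> bool" where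
  "restriction_closed T R \<longleftrightarrow> (\<forall>a\<in>R. \<forall>V U U' c P p q. a \<in> hom T V U \<longrightarrow> c \<in> hom T U' U \<longrightarrow>
     is_F_pullback T [V] [U'] [U] (single a) (single c) P p q \<longrightarrow> (\<forall>l<length P. snd q l \<in> R))"

context small_category
begin

lemma transfer_system_iff:
  "transfer_system T R \<longleftrightarrow>
    R \<subseteq> mr T \<and> (\<forall>f. iso T f \<longrightarrow> f \<in> R) \<and> comp_closed T R \<and> restriction_closed T R"
proof
  assume R: "transfer_system T R"
  note restrict = R[unfolded transfer_system_def, THEN conjunct2, THEN conjunct2, THEN conjunct2,
      rule_format]
  have "snd q l \<in> R"
    if a: "a \<in> R" "a \<in> hom T V U" and c: "c \<in> hom T U' U" and l: "l < length P"
      and pb: "is_F_pullback T [V] [U'] [U] (single a) (single c) P p q" for a V U U' c P p q l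
  proof (rule restrict[OF single_pullback_legs(3,4)[OF pb l] a(2) c single_pullback_legs(5)[OF pb l] a(1)])
    define m :: "'m fmor" where "m = (\<lambda>_. l, \<lambda>_. idm T (P!l))"
    have "F_obj T P"
      using pb by (simp add: is_F_pullback_def F_hom_def)
    then have "F_summand_incl T [P!l] P m"
      unfolding m_def using F_summand_incl_nth l by blast
    moreover have "F_eq [P!l] (F_comp T p m) (single (snd p l))"
      and "F_eq [P!l] (F_comp T q m) (single (snd q l))"
      using single_pullback_legs[OF pb l] by (simp_all add: m_def F_eq_def F_comp_def single_def cmp_idm_right)
    ultimately show "\<exists>P' p' q' m. is_F_pullback T [V] [U'] [U] (single a) (single c) P' p' q' \<and>
        F_hom T [P!l] P' m \<and> F_eq [P!l] (F_comp T p' m) (single (snd p l)) \<and>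
        F_eq [P!l] (F_comp T q' m) (single (snd q l)) \<and> F_summand_incl T [P!l] P' m"
      using pb unfolding F_summand_incl_def by blast
  qed
  then have "restriction_closed T R"
    unfolding restriction_closed_def by blast
  with R show "R \<subseteq> mr T \<and> (\<forall>f. iso T f \<longrightarrow> f \<in> R) \<and> comp_closed T R \<and> restriction_closed T R"
    unfolding transfer_system_def comp_closed_def by blast
next
  assume "R \<subseteq> mr T \<and> (\<forall>f. iso T f \<longrightarrow> f \<in> R) \<and> comp_closed T R \<and> restriction_closed T R"
  then have mr: "R \<subseteq> mr T" and iso: "\<And>f. iso T f \<Longrightarrow> f \<in> R" and comp: "comp_closed T R"
    and restrict: "restriction_closed T R" by blast+
  have "a' \<in> R"
    if a: "a \<in> R" "a \<in> hom T V U" and c: "c \<in> hom T U' U"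
      and pb: "is_F_pullback T [V] [U'] [U] (single a) (single c) P p q"
      and a': "F_eq [V'] (F_comp T q m) (single a')" and m: "F_summand_incl T [V'] P m"
    for V' V U' U a' a c P p q m
  proof -
    note j = F_summand_incl_singleton[OF m]
    have "a' = cmp T (snd q (fst m 0)) (snd m 0)"
      using a' by (simp add: F_eq_def F_comp_def single_def)
    moreover have "snd q (fst m 0) \<in> R"
      using restrict a c pb j(1) unfolding restriction_closed_def by blast
    moreover have "cd T (snd m 0) = dm T (snd q (fst m 0))"
      using j(2) single_pullback_legs(4)[OF pb j(1)] by (simp add: hom_def)
    ultimately show ?thesis
      using comp iso[OF j(3)] unfolding comp_closed_def by blast
  qed
  then show "transfer_system T R"
    using mr iso comp unfolding transfer_system_def comp_closed_def by blast
qed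

lemma frakR_comp_closed:
  assumes "weak_indexing_system T E"
  shows "comp_closed T (frakR T E)"
  unfolding comp_closed_def
proof (intro ballI impI)
  fix f g assume f: "f \<in> frakR T E" and g: "g \<in> frakR T E" and fg: "cd T f = dm T g"
  then have "f \<in> mr T" "g \<in> mr T"
    by (simp_all add: frakR_def)
  then have gf: "cmp T g f \<in> hom T (dm T f) (cd T g)"
    using cmp_hom[OF mr_in_hom mr_in_hom[of g, folded fg]] by blast
  have "S_coprod T [g] (\<lambda>_. [f]) \<in> E (cd T g)"
    using assms f g fg hom_ob[OF gf] unfolding weak_indexing_system_def frakR_def by simp
  then show "cmp T g f \<in> frakR T E"
    using gf by (simp add: frakR_def hom_def S_coprod_def Ind_def)
qed

end

lemma unital_wis_singleton:
  assumes "unital_wis T C" "V \<in> ob T" "S \<in> C V" "x \<in> set S"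
  shows "[x] \<in> C V"
proof -
  obtain xs ys where S: "S = xs @ [x] @ ys"
    using assms(4) split_list by fastforce
  have "\<And>S S'. S @ S' \<in> C V \<Longrightarrow> S \<in> C V \<and> S' \<in> C V"
    using assms(1,2) unfolding unital_wis_def by blast
  then show ?thesis
    using assms(3) S by blast
qed

context small_category
begin

lemma S_iso_idm_singleton:
  assumes f: "f \<in> hom T A V" and g: "g \<in> hom T V A"
    and "cmp T g f = idm T A" "cmp T f g = idm T V"
  shows "S_iso T V [idm T V] [f] (\<lambda>_. 0, \<lambda>_. g)"
proof -
  have ob: "A \<in> ob T" "V \<in> ob T"
    using hom_ob f by blast+
  have "S_hom T V [idm T V] [f] (\<lambda>_. 0, \<lambda>_. g)" "S_hom T V [f] [idm T V] (\<lambda>_. 0, \<lambda>_. f)"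
    using assms ob idm_hom[of V] cmp_idm_left[OF f]
    by (auto simp: S_hom_def S_obj_def F_hom_def F_obj_def hom_def)
  then show ?thesis
    using assms ob idm_hom[of V] idm_hom[of A]
    unfolding S_iso_def by (intro conjI exI) (auto simp: F_eq_def F_comp_def F_id_def hom_def)
qed

lemma iso_in_frakR:
  assumes C: "unital_wis T C" and f: "iso T f"
  shows "f \<in> frakR T C"
proof -
  obtain g where g: "g \<in> hom T (cd T f) (dm T f)" "cmp T g f = idm T (dm T f)" "cmp T f g = idm T (cd T f)"
    and fm: "f \<in> mr T"
    using f unfolding iso_def by blast
  have V: "cd T f \<in> ob T"
    using cd_ob[OF fm] .
  then have "[idm T (cd T f)] \<in> C (cd T f)"
    using C unfolding unital_wis_def weak_indexing_system_def by blast
  then have "[f] \<in> C (cd T f)"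
    using C V S_iso_idm_singleton[OF mr_in_hom[OF fm] g]
    unfolding unital_wis_def weak_indexing_system_def full_T_subcat_def by blast
  then show ?thesis
    using fm by (simp add: frakR_def)
qed

lemma restriction_closed_frakR:
  assumes C: "unital_wis T C"
  shows "restriction_closed T (frakR T C)"
  unfolding restriction_closed_def
proof (intro ballI allI impI)
  fix a V U U' c P p q l
  assume a: "a \<in> frakR T C" "a \<in> hom T V U" and c: "c \<in> hom T U' U" and l: "l < length P"
    and pb: "is_F_pullback T [V] [U'] [U] (single a) (single c) P p q"
  have "is_F_pullback T (map (dm T) [a]) [U'] [U] (S_struct [a]) (single c) P p q"
    using F_pullback_cong_left[OF _ pb] a(2) by (simp add: F_eq_def single_def S_struct_def hom_def)
  then have "map (snd q) [0..<length P] \<in> C U'"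
    using C a c unfolding unital_wis_def weak_indexing_system_def full_T_subcat_def frakR_def hom_def
    by blast
  then have "[snd q l] \<in> C U'"
    using unital_wis_singleton[OF C] hom_ob[OF c] l by simp
  then show "snd q l \<in> frakR T C"
    using single_pullback_legs(4)[OF pb l] by (simp add: frakR_def hom_def)
qed

lemma transfer_system_frakR:
  assumes "unital_wis T C"
  shows "transfer_system T (frakR T C)"
  using assms iso_in_frakR restriction_closed_frakR frakR_comp_closed
  unfolding transfer_system_iff unital_wis_def frakR_def by blast

end

locale orbital_category = small_category +
  assumes orbital: "orbital T"
begin

lemma F_hom_single: "a \<in> hom T V U \<Longrightarrow> F_hom T [V] [U] (single a)"
  using hom_ob by (fastforce simp: F_hom_def F_obj_def single_def)

lemma single_pullback_exists:
  assumes "a \<in> hom T V U" "c \<in> hom T U' U"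
  obtains P p q where "is_F_pullback T [V] [U'] [U] (single a) (single c) P p q"
  using orbital F_hom_single[OF assms(1)] F_hom_single[OF assms(2)] unfolding orbital_def by blast

lemma S_pullback_orbit_iso:
  assumes S: "S_obj T V S" and a: "a \<in> hom T U V"
    and pb: "is_F_pullback T (map (dm T) S) [U] [V] (S_struct S) (single a) P p q"
    and i: "i < length P"
  obtains P1 p1 q1 l u
  where "is_F_pullback T [dm T (S!fst p i)] [U] [V] (single (S!fst p i)) (single a) P1 p1 q1"
    and "l < length P1" "u \<in> hom T (P!i) (P1!l)" "iso T u" "snd q i = cmp T (snd q1 l) u"
proof -
  define k where "k = fst p i"
  note legs = F_pullback_legs[OF pb i, folded k_def]
  have k: "k < length S" and Sk: "S!k \<in> hom T (dm T (S!k)) V"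
    using legs(1) S by (auto simp: S_obj_def hom_def)
  obtain P1 p1 q1 where pb1: "is_F_pullback T [dm T (S!k)] [U] [V] (single (S!k)) (single a) P1 p1 q1"
    using single_pullback_exists[OF Sk a] .
  have pi: "snd p i \<in> hom T (P!i) (dm T (S!k))" and qi: "fst q i = 0" "snd q i \<in> hom T (P!i) U"
    and sq: "cmp T (S!k) (snd p i) = cmp T a (snd q i)"
    using legs k by (auto simp: S_struct_def single_def)
  obtain l u where l: "l < length P1" "u \<in> hom T (P!i) (P1!l)"
    and u: "cmp T (snd p1 l) u = snd p i" "cmp T (snd q1 l) u = snd q i"
    using single_pullback_lift[OF pb1 pi qi(2) sq] .
  note legs1 = single_pullback_legs[OF pb1 l(1)]
  obtain r v where r: "r < length P" "v \<in> hom T (P1!l) (P!r)" "fst p r = k" "fst q r = 0"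
    and v: "cmp T (snd p r) v = snd p1 l" "cmp T (snd q r) v = snd q1 l"
    by (rule F_pullback_lift[OF pb, of k 0 "snd p1 l" "P1!l" "snd q1 l"])
      (use legs1 k in \<open>auto simp: S_struct_def single_def\<close>)
  have pr: "snd p r \<in> hom T (P!r) (dm T (S!k))" "snd q r \<in> hom T (P!r) U"
    using F_pullback_legs(2,4)[OF pb r(1)] r(3,4) k by simp_all
  have "cmp T (snd p r) (cmp T v u) = snd p i" "cmp T (snd q r) (cmp T v u) = snd q i"
    using cmp_reassoc[OF l(2) r(2) pr(1) v(1)] cmp_reassoc[OF l(2) r(2) pr(2) v(2)] u by simp_all
  then have ri: "r = i" and vu: "cmp T v u = idm T (P!i)"
    using F_pullback_endo_idm[OF pb i r(1) cmp_hom[OF l(2) r(2)]] r(3,4) qi(1) by (simp_all add: k_def)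
  note v_hom = r(2)[unfolded ri]
  have "cmp T u v = idm T (P1!l)"
    using single_pullback_endo_idm[OF pb1 l(1) l(1) cmp_hom[OF v_hom l(2)]] v ri
      cmp_reassoc[OF v_hom l(2) legs1(3) u(1)] cmp_reassoc[OF v_hom l(2) legs1(4) u(2)] by simp
  then have "iso T u"
    using isoI[OF l(2) v_hom vu] by simp
  then show thesis
    using that pb1 l u(2) by (simp add: k_def)
qed

text \<open>Pasting: every orbit of the pullback along g o f is, up to isomorphism, an orbit of the
  pullback along f of an orbit of the pullback along g.\<close>
lemma composite_pullback_leg:
  assumes f: "f \<in> hom T V Y" and g: "g \<in> hom T Y U" and c: "c \<in> hom T U' U"
    and pb: "is_F_pullback T [V] [U'] [U] (single (cmp T g f)) (single c) P p q" and l: "l < length P"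
  obtains P1 p1 q1 j P2 p2 q2 l2 u
  where "is_F_pullback T [Y] [U'] [U] (single g) (single c) P1 p1 q1" "j < length P1"
    and "is_F_pullback T [V] [P1!j] [Y] (single f) (single (snd p1 j)) P2 p2 q2" "l2 < length P2"
    and "u \<in> hom T (P!l) (P2!l2)" "iso T u" "snd q l = cmp T (snd q1 j) (cmp T (snd q2 l2) u)"
proof -
  note legs = single_pullback_legs[OF pb l]
  obtain P1 p1 q1 where pb1: "is_F_pullback T [Y] [U'] [U] (single g) (single c) P1 p1 q1"
    using single_pullback_exists[OF g c] .
  have "cmp T g (cmp T f (snd p l)) = cmp T c (snd q l)"
    using cmp_assoc[OF legs(3) f g] legs(5) by simp
  then obtain j e where j: "j < length P1" "e \<in> hom T (P!l) (P1!j)"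
    and e: "cmp T (snd p1 j) e = cmp T f (snd p l)" "cmp T (snd q1 j) e = snd q l"
    using single_pullback_lift[OF pb1 cmp_hom[OF legs(3) f] legs(4)] by blast
  obtain P2 p2 q2 where pb2: "is_F_pullback T [V] [P1!j] [Y] (single f) (single (snd p1 j)) P2 p2 q2"
    using single_pullback_exists[OF f single_pullback_legs(3)[OF pb1 j(1)]] .
  obtain l2 u where l2: "l2 < length P2" "u \<in> hom T (P!l) (P2!l2)"
    and u: "cmp T (snd p2 l2) u = snd p l" "cmp T (snd q2 l2) u = e"
    using single_pullback_lift[OF pb2 legs(3) j(2) e(1)[symmetric]] .
  have "iso T u"
    by (rule pasting_lift_iso[OF f g c pb l pb1 j(1) pb2 l2 u(1)]) (simp add: u(2) e(2))
  moreover have "snd q l = cmp T (snd q1 j) (cmp T (snd q2 l2) u)"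
    using u(2) e(2) by simp
  ultimately show thesis
    by (rule that[OF pb1 j(1) pb2 l2])
qed

end

section \<open>Joins of transfer systems\<close>

inductive_set comp_closure :: "('o, 'm) cat \<Rightarrow> 'm set \<Rightarrow> 'm set" for T R where
  base: "a \<in> R \<Longrightarrow> a \<in> comp_closure T R"
| comp: "f \<in> comp_closure T R \<Longrightarrow> g \<in> comp_closure T R \<Longrightarrow> cd T f = dm T g \<Longrightarrow>
    cmp T g f \<in> comp_closure T R"

lemma comp_closed_comp_closure: "comp_closed T (comp_closure T R)"
  unfolding comp_closed_def by (blast intro: comp_closure.comp)

lemma comp_closure_least:
  assumes "R \<subseteq> S" "comp_closed T S"
  shows "comp_closure T R \<subseteq> S"
proof
  fix a assume "a \<in> comp_closure T R"
  then show "a \<in> S"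
    by induction (use assms in \<open>auto simp: comp_closed_def\<close>)
qed

lemma restriction_closed_Un:
  "restriction_closed T R1 \<Longrightarrow> restriction_closed T R2 \<Longrightarrow> restriction_closed T (R1 \<union> R2)"
  unfolding restriction_closed_def by blast

context small_category
begin

lemma comp_closure_subset_mr:
  assumes "R \<subseteq> mr T"
  shows "comp_closure T R \<subseteq> mr T"
proof
  fix a assume "a \<in> comp_closure T R"
  then show "a \<in> mr T"
    by induction (use assms cmp_mr in auto)
qed

end

context orbital_category
begin

lemma restriction_closed_comp_closure:
  assumes mr: "R \<subseteq> mr T" and iso: "\<And>f. iso T f \<Longrightarrow> f \<in> R" and restrict: "restriction_closed T R"
  shows "restriction_closed T (comp_closure T R)"
proof -
  have "\<forall>V U U' c P p q. a \<in> hom T V U \<longrightarrow> c \<in> hom T U' U \<longrightarrow>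
      is_F_pullback T [V] [U'] [U] (single a) (single c) P p q \<longrightarrow> (\<forall>l<length P. snd q l \<in> comp_closure T R)"
    if "a \<in> comp_closure T R" for a
    using that
  proof induction
    case (base a)
    then show ?case
      using restrict unfolding restriction_closed_def by (blast intro: comp_closure.base)
  next
    case (comp f g)
    show ?case
    proof (intro allI impI)
      fix V U U' c P p q l
      assume gf: "cmp T g f \<in> hom T V U" and c: "c \<in> hom T U' U" and l: "l < length P"
        and pb: "is_F_pullback T [V] [U'] [U] (single (cmp T g f)) (single c) P p q"
      have "f \<in> mr T" "g \<in> mr T"
        using comp.hyps(1,2) comp_closure_subset_mr[OF mr] by blast+
      then have f: "f \<in> hom T V (cd T f)" and g: "g \<in> hom T (cd T f) U"
        using gf comp.hyps(3) cmp_mr by (auto simp: hom_def)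
      obtain P1 p1 q1 j P2 p2 q2 l2 u
        where pb1: "is_F_pullback T [cd T f] [U'] [U] (single g) (single c) P1 p1 q1" "j < length P1"
          and pb2: "is_F_pullback T [V] [P1!j] [cd T f] (single f) (single (snd p1 j)) P2 p2 q2" "l2 < length P2"
          and u: "u \<in> hom T (P!l) (P2!l2)" "iso T u"
          and q: "snd q l = cmp T (snd q1 j) (cmp T (snd q2 l2) u)"
        using composite_pullback_leg[OF f g c pb l] .
      note legs1 = single_pullback_legs[OF pb1] and legs2 = single_pullback_legs[OF pb2]
      have "snd q1 j \<in> comp_closure T R" "snd q2 l2 \<in> comp_closure T R" "u \<in> comp_closure T R"
        using comp.IH g c pb1 f legs1(3) pb2 iso u(2) by (blast intro: comp_closure.base)+
      moreover have "cmp T (snd q2 l2) u \<in> hom T (P!l) (P1!j)"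
        using cmp_hom[OF u(1) legs2(4)] .
      ultimately show "snd q l \<in> comp_closure T R"
        using q u(1) legs1(4) legs2(4) by (auto intro!: comp_closure.comp simp: hom_def)
    qed
  qed
  then show ?thesis
    unfolding restriction_closed_def by blast
qed

lemma transf_join_eq_comp_closure:
  assumes "transfer_system T R1" "transfer_system T R2"
  shows "transf_join T R1 R2 = comp_closure T (R1 \<union> R2)"
proof
  have mr: "R1 \<union> R2 \<subseteq> mr T" and iso: "\<And>f. iso T f \<Longrightarrow> f \<in> R1 \<union> R2"
    and restrict: "restriction_closed T (R1 \<union> R2)"
    using assms restriction_closed_Un unfolding transfer_system_iff by blast+
  then have "transfer_system T (comp_closure T (R1 \<union> R2))"
    using comp_closure_subset_mr[OF mr] comp_closed_comp_closure restriction_closed_comp_closure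
    unfolding transfer_system_iff by (blast intro: comp_closure.base)
  then show "transf_join T R1 R2 \<subseteq> comp_closure T (R1 \<union> R2)"
    unfolding transf_join_def by (blast intro: comp_closure.base)
  show "comp_closure T (R1 \<union> R2) \<subseteq> transf_join T R1 R2"
    using comp_closure_least unfolding transf_join_def transfer_system_iff by blast
qed

end

section \<open>Joins of weak indexing systems\<close>

definition wis_of_transf :: "('o, 'm) cat \<Rightarrow> 'm set \<Rightarrow> ('o, 'm) tsub" where
  "wis_of_transf T R = (\<lambda>V. {S. S_obj T V S \<and> set S \<subseteq> R})"

lemma set_S_coprod: "x \<in> set (S_coprod T S Ts) \<longleftrightarrow> (\<exists>i<length S. \<exists>t\<in>set (Ts i). x = cmp T (S!i) t)"
  by (auto simp: S_coprod_def Ind_def)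

context small_category
begin

lemma S_iso_nth:
  assumes "S_iso T V S S' m" "j < length S'"
  obtains i k where "i < length S" "iso T k" "cd T k = dm T (S!i)" "S'!j = cmp T (S!i) k"
proof -
  obtain m' where hm: "S_hom T V S S' m" and hm': "S_hom T V S' S m'"
    and e1: "F_eq (map (dm T) S) (F_comp T m' m) (F_id T (map (dm T) S))"
    and e2: "F_eq (map (dm T) S') (F_comp T m m') (F_id T (map (dm T) S'))"
    using assms(1) unfolding S_iso_def by blast
  define i where "i = fst m' j"
  have i: "i < length S" "S'!j = cmp T (S!i) (snd m' j)"
    and k: "snd m' j \<in> hom T (dm T (S'!j)) (dm T (S!i))"
    using hm' assms(2) by (auto simp: S_hom_def F_hom_def i_def)
  have mi: "fst m i = j" "cmp T (snd m i) (snd m' j) = idm T (dm T (S'!j))"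
    using e2 assms(2) by (auto simp: F_eq_def F_comp_def F_id_def i_def)
  have "snd m i \<in> hom T (dm T (S!i)) (dm T (S'!j))" "cmp T (snd m' j) (snd m i) = idm T (dm T (S!i))"
    using hm e1 i(1) mi(1) by (auto simp: S_hom_def F_hom_def F_eq_def F_comp_def F_id_def)
  then have "iso T (snd m' j)"
    using isoI[OF k] mi(2) by blast
  then show thesis
    using that[OF i(1)] i(2) k by (simp add: hom_def)
qed

lemma wis_of_transf_S_iso:
  assumes R: "transfer_system T R" and S: "S \<in> wis_of_transf T R V" and m: "S_iso T V S S' m"
  shows "S' \<in> wis_of_transf T R V"
proof -
  have "S'!j \<in> R" if j: "j < length S'" for j
  proof -
    obtain i k where i: "i < length S" "iso T k" "cd T k = dm T (S!i)" "S'!j = cmp T (S!i) k"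
      using S_iso_nth[OF m j] .
    have "S!i \<in> R"
      using S i(1) nth_mem by (force simp: wis_of_transf_def)
    moreover have "k \<in> R"
      using R i(2) unfolding transfer_system_iff by blast
    ultimately show ?thesis
      using R i(3,4) unfolding transfer_system_iff comp_closed_def by simp
  qed
  moreover have "S_obj T V S'"
    using m unfolding S_iso_def S_hom_def by blast
  ultimately show ?thesis
    by (auto simp: wis_of_transf_def in_set_conv_nth)
qed

lemma wis_of_transf_S_coprod:
  assumes R: "comp_closed T R" and S: "S \<in> wis_of_transf T R V"
    and Ts: "\<forall>i<length S. Ts i \<in> wis_of_transf T R (dm T (S!i))"
  shows "S_coprod T S Ts \<in> wis_of_transf T R V"
proof -
  have "x \<in> mr T \<and> cd T x = V \<and> x \<in> R" if x: "x \<in> set (S_coprod T S Ts)" for x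
  proof -
    obtain i t where i: "i < length S" and t: "t \<in> set (Ts i)" and x: "x = cmp T (S!i) t"
      using x unfolding set_S_coprod by blast
    have "t \<in> mr T" "cd T t = dm T (S!i)" "t \<in> R"
      using Ts i t by (auto simp: wis_of_transf_def S_obj_def)
    moreover have "S!i \<in> mr T" "cd T (S!i) = V" "S!i \<in> R"
      using S i by (auto simp: wis_of_transf_def S_obj_def)
    ultimately show ?thesis
      using R cmp_mr x unfolding comp_closed_def by simp
  qed
  moreover have "V \<in> ob T"
    using S by (simp add: wis_of_transf_def S_obj_def)
  ultimately show ?thesis
    by (auto simp: wis_of_transf_def S_obj_def)
qed

end

context orbital_category
begin

lemma wis_of_transf_restrict:
  assumes R: "transfer_system T R" and a: "a \<in> hom T U V" and S: "S \<in> wis_of_transf T R V"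
    and pb: "is_F_pullback T (map (dm T) S) [U] [V] (S_struct S) (single a) P p q"
  shows "map (snd q) [0..<length P] \<in> wis_of_transf T R U"
proof -
  have S_obj: "S_obj T V S" and SR: "set S \<subseteq> R"
    using S by (auto simp: wis_of_transf_def)
  have iso: "\<And>f. iso T f \<Longrightarrow> f \<in> R" and comp: "comp_closed T R" and restrict: "restriction_closed T R"
    using R unfolding transfer_system_iff by blast+
  have "snd q i \<in> R" if i: "i < length P" for i
  proof -
    define k where "k = fst p i"
    obtain P1 p1 q1 l u
      where pb1: "is_F_pullback T [dm T (S!k)] [U] [V] (single (S!k)) (single a) P1 p1 q1"
        and l: "l < length P1" and u: "u \<in> hom T (P!i) (P1!l)" "iso T u"
        and q: "snd q i = cmp T (snd q1 l) u"
      using S_pullback_orbit_iso[OF S_obj a pb i] unfolding k_def .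
    have "S!k \<in> R" "S!k \<in> hom T (dm T (S!k)) V"
      using F_pullback_legs(1)[OF pb i] S_obj SR by (auto simp: S_obj_def hom_def k_def)
    then have "snd q1 l \<in> R"
      using restrict a pb1 l unfolding restriction_closed_def by blast
    then show ?thesis
      using comp iso[OF u(2)] q u(1) single_pullback_legs(4)[OF pb1 l]
      unfolding comp_closed_def by (simp add: hom_def)
  qed
  moreover have "snd q i \<in> hom T (P!i) U" if "i < length P" for i
    using F_pullback_legs(3,4)[OF pb that] by auto
  moreover have "U \<in> ob T"
    using hom_ob[OF a] by blast
  ultimately show ?thesis
    by (auto simp: wis_of_transf_def S_obj_def hom_def)
qed

lemma weak_indexing_system_wis_of_transf:
  assumes R: "transfer_system T R"
  shows "weak_indexing_system T (wis_of_transf T R)"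
proof -
  have "[idm T V] \<in> wis_of_transf T R V" if "V \<in> ob T" for V
    using R that iso_idm idm_hom by (auto simp: transfer_system_iff wis_of_transf_def S_obj_def hom_def)
  moreover have "comp_closed T R"
    using R transfer_system_iff by blast
  moreover have "wis_of_transf T R V \<subseteq> {S. S_obj T V S}" for V
    by (auto simp: wis_of_transf_def)
  ultimately show ?thesis
    using wis_of_transf_S_iso[OF R] wis_of_transf_restrict[OF R] wis_of_transf_S_coprod
    unfolding weak_indexing_system_def full_T_subcat_def by blast
qed

end

context small_category
begin

lemma unital_wis_subset_wis_of_transf:
  assumes C: "unital_wis T C" and R: "frakR T C \<subseteq> R" and V: "V \<in> ob T"
  shows "C V \<subseteq> wis_of_transf T R V"
proof
  fix S assume S: "S \<in> C V"
  then have "S_obj T V S"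
    using C V unfolding unital_wis_def weak_indexing_system_def full_T_subcat_def by blast
  moreover have "x \<in> R" if "x \<in> set S" for x
    using unital_wis_singleton[OF C V S that] R \<open>S_obj T V S\<close> that
    by (auto simp: frakR_def S_obj_def)
  ultimately show "S \<in> wis_of_transf T R V"
    by (auto simp: wis_of_transf_def)
qed

lemma frakR_mono: "(\<And>W. W \<in> ob T \<Longrightarrow> C W \<subseteq> E W) \<Longrightarrow> frakR T C \<subseteq> frakR T E"
  using cd_ob by (auto simp: frakR_def)

lemma frakR_wis_join:
  "frakR T (wis_join T C D) = {a \<in> mr T. \<forall>E. weak_indexing_system T E \<and>
     (\<forall>W\<in>ob T. C W \<subseteq> E W \<and> D W \<subseteq> E W) \<longrightarrow> a \<in> frakR T E}"
  using cd_ob by (auto simp: frakR_def wis_join_def)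

lemma comp_closure_subset_frakR_wis_join:
  "comp_closure T (frakR T C \<union> frakR T D) \<subseteq> frakR T (wis_join T C D)"
proof -
  have "comp_closure T (frakR T C \<union> frakR T D) \<subseteq> frakR T E"
    if "weak_indexing_system T E" "\<forall>W\<in>ob T. C W \<subseteq> E W \<and> D W \<subseteq> E W" for E
    using that frakR_mono comp_closure_least frakR_comp_closed by (metis Un_least)
  moreover have "comp_closure T (frakR T C \<union> frakR T D) \<subseteq> mr T"
    by (rule comp_closure_subset_mr) (auto simp: frakR_def)
  ultimately show ?thesis
    unfolding frakR_wis_join by blast
qed

end

lemma (in orbital_category) frakR_wis_join_subset:
  assumes "unital_wis T C" "unital_wis T D" "transfer_system T R" "frakR T C \<union> frakR T D \<subseteq> R"
  shows "frakR T (wis_join T C D) \<subseteq> R"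
proof
  fix a assume "a \<in> frakR T (wis_join T C D)"
  moreover have "\<forall>W\<in>ob T. C W \<subseteq> wis_of_transf T R W \<and> D W \<subseteq> wis_of_transf T R W"
    using unital_wis_subset_wis_of_transf assms(1,2,4) by blast
  ultimately have "a \<in> frakR T (wis_of_transf T R)"
    using weak_indexing_system_wis_of_transf[OF assms(3)] unfolding frakR_wis_join by blast
  then show "a \<in> R"
    by (simp add: frakR_def wis_of_transf_def)
qed

theorem mainTheorem16:
  fixes T :: "('o, 'm) cat" and C D :: "('o, 'm) tsub"
  assumes "orbital T" and "unital_wis T C" and "unital_wis T D"
  shows "transf_join T (frakR T C) (frakR T D) = frakR T (wis_join T C D)
       \<and> frakR T C \<inter> frakR T D = frakR T (wis_meet C D)"
proof
  interpret orbital_category T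
    using assms(1) by unfold_locales (simp_all add: orbital_def)
  have R: "transfer_system T (frakR T C)" "transfer_system T (frakR T D)"
    using transfer_system_frakR assms(2,3) by blast+
  have "frakR T (wis_join T C D) \<subseteq> transf_join T (frakR T C) (frakR T D)"
    using frakR_wis_join_subset[OF assms(2,3)] unfolding transf_join_def by blast
  then show "transf_join T (frakR T C) (frakR T D) = frakR T (wis_join T C D)"
    using comp_closure_subset_frakR_wis_join transf_join_eq_comp_closure[OF R] by blast
  show "frakR T C \<inter> frakR T D = frakR T (wis_meet C D)"
    by (auto simp: frakR_def wis_meet_def)
qed

end
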